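(* (Wedderburn Formula.) Let $t\in\mathbb{R}$, let $D$ be a nonconstant complex polynomial with $\mu_a$ the multiplicity of each root $a$. The remainder of the division of the generalized polynomial $e^{tX}$ by $D$ (the unique polynomial $R$ of degree $<\deg D$ with $e^{tX}=Dq+R$, $q$ a generalized polynomial) is $$\sum_{D(a)=0}J_a^{\mu_a-1}\!\left(e^{tX}\frac{(X-a)^{\mu_a}}{D(X)}\right)\frac{D(X)}{(X-a)^{\mu_a}},$$ where $J_a^{\mu}(e^{tX}g(X))$, for a rational fraction $g$ without pole at $a$ and $\mu\ge0$, is the unique polynomial of degree $\le\mu$ congruent modulo $(X-a)^{\mu+1}$ to $e^{at}J_a^\mu(g)\sum_{n=0}^{\mu}\frac{t^n(X-a)^n}{n!}$.
   Context: A generalized polynomial is a family $f=(f_a)_{a\in\mathbb{C}}$ with $f_a=\sum_{n\ge0}f_{a,n}(X-a)^n\in\mathbb{C}[[X-a]]$, with componentwise operations; complex polynomials and rational fractions without poles are identified with families of their Taylor expansions. $e^{tX}$ is the generalized polynomial $\big(e^{at}\sum_{n\ge0}\frac{t^n(X-a)^n}{n!}\big)_{a\in\mathbb{C}}$. $J_a^{m}(h):=\sum_{n\le m}h_{a,n}(X-a)^n$. *)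

theory Defs
  imports "HOL-Computational_Algebra.Computational_Algebra"
begin

text \<open>A generalized polynomial: a family (f_a) of formal power series, f_a in C[[X-a]],
  represented as a function a \<mapsto> (power series in the variable X-a).\<close>
type_synonym gpoly = "complex \<Rightarrow> complex fps"

definition taylor :: "complex poly \<Rightarrow> complex \<Rightarrow> complex fps" where
  "taylor p a = fps_of_poly (pcompose p [:a, 1:])"

definition gp_of_poly :: "complex poly \<Rightarrow> gpoly" where
  "gp_of_poly p = (\<lambda>a. taylor p a)"

definition gp_mult :: "gpoly \<Rightarrow> gpoly \<Rightarrow> gpoly" where
  "gp_mult f g = (\<lambda>a. f a * g a)"

definition gp_add :: "gpoly \<Rightarrow> gpoly \<Rightarrow> gpoly" where
  "gp_add f g = (\<lambda>a. f a + g a)"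

text \<open>The generalized polynomial e^{tX}: at a, e^{at} sum t^n (X-a)^n / n!.\<close>
definition gp_exp :: "real \<Rightarrow> gpoly" where
  "gp_exp t = (\<lambda>a. fps_const (exp (a * complex_of_real t)) * fps_exp (complex_of_real t))"

definition jet :: "complex \<Rightarrow> nat \<Rightarrow> complex fps \<Rightarrow> complex poly" where
  "jet a m h = (\<Sum>n\<le>m. smult (h $ n) ([:-a, 1:] ^ n))"

text \<open>The Wedderburn sum: sum over roots a of D of
  J_a^{mu_a-1}(e^{tX} (X-a)^{mu_a}/D(X)) * D(X)/(X-a)^{mu_a}; the expansion of the rational
  fraction (X-a)^{mu_a}/D at a is the quotient of the Taylor expansions (fps division,
  which cancels the common factor (X-a)^{mu_a}).\<close>
definition wedderburn_sum :: "real \<Rightarrow> complex poly \<Rightarrow> complex poly" where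
  "wedderburn_sum t D =
     (\<Sum>a\<in>{a. poly D a = 0}.
        jet a (order a D - 1)
          (gp_exp t a * (taylor ([:-a, 1:] ^ order a D) a / taylor D a))
        * (D div [:-a, 1:] ^ order a D))"

end

theory Submission
  imports Defs
begin

text \<open>At a root a of D of multiplicity m, the Taylor expansion of D is X^m times a unit u
  of the power series ring, so e^{tX} = D q + R for some generalized polynomial q says exactly
  that R agrees with e^{tX} to order m at every root. Two such R of degree below deg D coincide,
  since the multiplicities add up to deg D. In the Wedderburn sum, the summand of a root b \<noteq> a
  is divisible by (X - a)^m, while the summand of a is the truncation of e^{tX} / u multiplied
  by u, which agrees with e^{tX} to order m.\<close>

lemma taylor_add: "taylor (p + q) a = taylor p a + taylor q a"
  by (simp add: taylor_def pcompose_add fps_of_poly_add)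

lemma taylor_diff: "taylor (p - q) a = taylor p a - taylor q a"
  by (simp add: taylor_def pcompose_diff fps_of_poly_diff)

lemma taylor_mult: "taylor (p * q) a = taylor p a * taylor q a"
  by (simp add: taylor_def pcompose_mult fps_of_poly_mult)

lemma taylor_smult: "taylor (smult c p) a = fps_const c * taylor p a"
  by (simp add: taylor_def pcompose_smult fps_of_poly_smult)

lemma taylor_sum: "taylor (sum f A) a = (\<Sum>x\<in>A. taylor (f x) a)"
  by (simp add: taylor_def pcompose_sum fps_of_poly_sum)

lemma taylor_power: "taylor (p ^ n) a = taylor p a ^ n"
  by (induct n) (simp_all add: taylor_mult, simp add: taylor_def pcompose_1)

lemma taylor_linear: "taylor [:-a, 1:] a = fps_X"
  by (simp add: taylor_def pcompose_pCons fps_of_poly_pCons)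

lemma taylor_linear_power: "taylor ([:-a, 1:] ^ n) a = fps_X ^ n"
  by (simp add: taylor_power taylor_linear)

lemma taylor_nth_0: "taylor p a $ 0 = poly p a"
  by (simp add: taylor_def poly_0_coeff_0[symmetric] poly_pcompose)

lemma taylor_eq_0_iff: "taylor p a = 0 \<longleftrightarrow> p = 0"
  by (simp add: taylor_def fps_of_poly_eq_iff[of _ 0, simplified] pcompose_eq_0_iff)

lemma fps_X_power_dvd_iff: "fps_X ^ n dvd (f :: 'a :: comm_ring_1 fps) \<longleftrightarrow> (\<forall>i<n. f $ i = 0)"
proof
  assume "fps_X ^ n dvd f"
  then obtain g where "f = fps_X ^ n * g" by (elim dvdE)
  then show "\<forall>i<n. f $ i = 0" by (simp add: fps_X_power_mult_nth)
next
  assume "\<forall>i<n. f $ i = 0"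
  then have "f = fps_X ^ n * fps_shift n f"
    by (auto simp: fps_eq_iff fps_X_power_mult_nth)
  then show "fps_X ^ n dvd f" by (metis dvd_triv_left)
qed

lemma fps_X_power_div_mult_unit:
  fixes u :: "'a :: field fps"
  assumes "u $ 0 \<noteq> 0"
  shows "fps_X ^ m / (fps_X ^ m * u) = inverse u"
proof -
  have "fps_X ^ m / (fps_X ^ m * u) = (fps_X ^ m * 1) / (fps_X ^ m * u)" by simp
  also have "\<dots> = 1 / u" by (rule div_mult_mult1) simp
  also have "\<dots> = inverse u" using assms by (simp add: fps_divide_unit)
  finally show ?thesis .
qed

abbreviation root_cofactor :: "'a :: idom_divide \<Rightarrow> 'a poly \<Rightarrow> 'a poly" where
  "root_cofactor a p \<equiv> p div [:-a, 1:] ^ order a p"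

lemma root_cofactor_decomp: "p = [:-a, 1:] ^ order a p * root_cofactor a p"
  by (simp add: order_1)

lemma root_cofactor_nonzero:
  assumes "p \<noteq> 0"
  shows "root_cofactor a p \<noteq> 0"
  using assms root_cofactor_decomp[of p a] by (metis mult_zero_right)

lemma order_root_cofactor:
  fixes p :: "'a :: idom_divide poly"
  assumes "p \<noteq> 0"
  shows "order a p = order a ([:-b, 1:] ^ order b p) + order a (root_cofactor b p)"
  using assms root_cofactor_decomp[of p b] order_mult by metis

lemma poly_root_cofactor_nonzero:
  fixes p :: "'a :: idom_divide poly"
  assumes "p \<noteq> 0"
  shows "poly (root_cofactor a p) a \<noteq> 0"
proof -
  have "order a (root_cofactor a p) = 0"
    using order_root_cofactor[OF assms, of a a] by (simp add: order_power_n_n)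
  then show ?thesis using root_cofactor_nonzero[OF assms] order_root by blast
qed

lemma linear_power_dvd_root_cofactor:
  fixes p :: "'a :: idom_divide poly"
  assumes "p \<noteq> 0" "b \<noteq> a"
  shows "[:-a, 1:] ^ order a p dvd root_cofactor b p"
proof -
  have "order a ([:-b, 1:] ^ order b p) = 0"
    using assms(2) by (intro order_0I) auto
  then have "order a p = order a (root_cofactor b p)"
    using order_root_cofactor[OF assms(1), of a b] by simp
  then show ?thesis using order_1 by metis
qed

lemma taylor_eq_fps_X_power_mult:
  "taylor p a = fps_X ^ order a p * taylor (root_cofactor a p) a"
  by (subst (1) root_cofactor_decomp[of p a]) (simp add: taylor_mult taylor_linear_power)

lemma subdegree_taylor:
  assumes "p \<noteq> 0"
  shows "subdegree (taylor p a) = order a p"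
proof -
  have "taylor (root_cofactor a p) a $ 0 \<noteq> 0"
    using poly_root_cofactor_nonzero[OF assms] by (simp add: taylor_nth_0)
  then have "subdegree (taylor (root_cofactor a p) a) = 0" "taylor (root_cofactor a p) a \<noteq> 0"
    by auto
  then show ?thesis
    by (subst taylor_eq_fps_X_power_mult) (simp add: fps_subdegree_mult_fps_X_power)
qed

lemma taylor_dvd_iff:
  assumes "p \<noteq> 0"
  shows "taylor p a dvd f \<longleftrightarrow> fps_X ^ order a p dvd f"
proof (cases "f = 0")
  case False
  then show ?thesis
    using assms by (simp add: fps_dvd_iff taylor_eq_0_iff subdegree_taylor fps_X_power_subdegree)
qed simp

lemma taylor_dvd_taylor_iff:
  assumes "p \<noteq> 0" "q \<noteq> 0"
  shows "taylor p a dvd taylor q a \<longleftrightarrow> order a p \<le> order a q"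
  using assms by (simp add: fps_dvd_iff taylor_eq_0_iff subdegree_taylor)

lemma degree_eq_sum_order:
  fixes p :: "complex poly"
  assumes "p \<noteq> 0"
  shows "degree p = (\<Sum>a | poly p a = 0. order a p)"
proof -
  have "degree p = degree (smult (lead_coeff p) (\<Prod>a | poly p a = 0. [:-a, 1:] ^ order a p))"
    by (simp add: complex_poly_decompose)
  also have "\<dots> = (\<Sum>a | poly p a = 0. order a p)"
    using assms by (simp add: degree_prod_sum_eq degree_power_eq)
  finally show ?thesis .
qed

lemma degree_le_if_order_le:
  fixes p q :: "complex poly"
  assumes "p \<noteq> 0" "q \<noteq> 0" and order_le: "\<And>a. order a p \<le> order a q"
  shows "degree p \<le> degree q"
proof -
  have roots: "{a. poly p a = 0} \<subseteq> {a. poly q a = 0}"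
    using assms order_le by (auto simp: order_root intro: less_le_trans)
  have "degree p = (\<Sum>a | poly p a = 0. order a p)"
    by (rule degree_eq_sum_order[OF assms(1)])
  also have "\<dots> \<le> (\<Sum>a | poly p a = 0. order a q)"
    by (intro sum_mono order_le)
  also have "\<dots> \<le> (\<Sum>a | poly q a = 0. order a q)"
    using assms(2) poly_roots_finite roots by (intro sum_mono2) auto
  also have "\<dots> \<le> degree q"
    by (rule sum_order_le_degree[OF assms(2)])
  finally show ?thesis .
qed

lemma gp_remainder_iff:
  "(\<exists>q. E = gp_add (gp_mult (gp_of_poly D) q) (gp_of_poly R)) \<longleftrightarrow>
     (\<forall>a. taylor D a dvd E a - taylor R a)"
proof -
  have "(\<exists>q. E = gp_add (gp_mult (gp_of_poly D) q) (gp_of_poly R)) \<longleftrightarrow>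
        (\<exists>q. \<forall>a. E a - taylor R a = taylor D a * q a)"
    by (simp add: fun_eq_iff gp_add_def gp_mult_def gp_of_poly_def algebra_simps)
  also have "\<dots> \<longleftrightarrow> (\<forall>a. \<exists>g. E a - taylor R a = taylor D a * g)"
    by (rule choice_iff[symmetric])
  finally show ?thesis by (simp add: dvd_def)
qed

lemma gp_remainder_unique:
  assumes "D \<noteq> 0" "degree R < degree D" "degree R' < degree D"
    and "\<And>a. taylor D a dvd E a - taylor R a" "\<And>a. taylor D a dvd E a - taylor R' a"
  shows "R = R'"
proof (rule ccontr)
  assume "R \<noteq> R'"
  then have "R' - R \<noteq> 0" by simp
  have "taylor D a dvd taylor (R' - R) a" for a
    using dvd_diff[OF assms(4,5)] by (simp add: taylor_diff)
  then have "order a D \<le> order a (R' - R)" for a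
    using taylor_dvd_taylor_iff[OF assms(1) \<open>R' - R \<noteq> 0\<close>] by blast
  then have "degree D \<le> degree (R' - R)"
    by (rule degree_le_if_order_le[OF assms(1) \<open>R' - R \<noteq> 0\<close>])
  moreover have "degree (R' - R) < degree D"
    using assms(2,3) degree_diff_le_max[of R' R] by linarith
  ultimately show False by simp
qed

lemma taylor_jet_nth: "taylor (jet a m h) a $ n = (if n \<le> m then h $ n else 0)"
  by (simp add: jet_def taylor_sum taylor_smult taylor_linear_power fps_sum_nth
      if_distrib[of "\<lambda>x. _ * x"] sum.delta cong: if_cong)

lemma fps_X_power_dvd_sub_taylor_jet: "fps_X ^ Suc m dvd h - taylor (jet a m h) a"
  unfolding fps_X_power_dvd_iff by (simp add: taylor_jet_nth)

lemma degree_jet: "degree (jet a m h) \<le> m"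
  unfolding jet_def
  by (intro degree_sum_le) (auto intro: order.trans[OF degree_smult_le] simp: degree_linear_power)

lemma degree_wedderburn_sum:
  assumes "degree D > 0"
  shows "degree (wedderburn_sum t D) < degree D"
  unfolding wedderburn_sum_def
proof (rule degree_sum_less[OF _ assms])
  fix a assume "a \<in> {a. poly D a = 0}"
  moreover have "D \<noteq> 0" using assms by auto
  ultimately have "order a D \<noteq> 0" by (simp add: order_root)
  have "degree D = order a D + degree (root_cofactor a D)"
    using \<open>D \<noteq> 0\<close> root_cofactor_nonzero[OF \<open>D \<noteq> 0\<close>]
    by (subst (1) root_cofactor_decomp[of D a]) (simp add: degree_mult_eq degree_linear_power)
  moreover have "degree (jet a (order a D - 1) h) < order a D" for h
    using degree_jet[of a "order a D - 1" h] \<open>order a D \<noteq> 0\<close> by linarith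
  ultimately show "degree (jet a (order a D - 1) (gp_exp t a *
      (taylor ([:-a, 1:] ^ order a D) a / taylor D a)) * root_cofactor a D) < degree D"
    by (intro le_less_trans[OF degree_mult_le]) simp
qed

lemma fps_X_power_dvd_taylor_mult_root_cofactor:
  assumes "D \<noteq> 0" "b \<noteq> a"
  shows "fps_X ^ order a D dvd taylor (p * root_cofactor b D) a"
proof -
  obtain s where "root_cofactor b D = [:-a, 1:] ^ order a D * s"
    using linear_power_dvd_root_cofactor[OF assms] by (elim dvdE)
  then show ?thesis by (simp add: taylor_mult taylor_linear_power)
qed

lemma fps_X_power_dvd_sub_taylor_wedderburn_summand:
  assumes "D \<noteq> 0" "poly D a = 0"
  defines "m \<equiv> order a D"
  shows "fps_X ^ m dvd
    E - taylor (jet a (m - 1) (E * (taylor ([:-a, 1:] ^ m) a / taylor D a)) * root_cofactor a D) a"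
proof -
  define u where "u = taylor (root_cofactor a D) a"
  define h where "h = E * inverse u"
  have "u $ 0 \<noteq> 0"
    using poly_root_cofactor_nonzero[OF assms(1)] by (simp add: u_def taylor_nth_0)
  have "taylor ([:-a, 1:] ^ m) a / taylor D a = inverse u"
    using \<open>u $ 0 \<noteq> 0\<close> taylor_eq_fps_X_power_mult[of D a]
    by (simp add: u_def m_def taylor_linear_power fps_X_power_div_mult_unit)
  moreover have "h * u = E"
    using \<open>u $ 0 \<noteq> 0\<close> by (simp add: h_def inverse_mult_eq_1)
  ultimately have "E - taylor (jet a (m - 1) (E * (taylor ([:-a, 1:] ^ m) a / taylor D a))
      * root_cofactor a D) a = (h - taylor (jet a (m - 1) h) a) * u"
    by (simp add: taylor_mult left_diff_distrib flip: h_def u_def)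
  moreover have "Suc (m - 1) = m"
    using assms(1,2) by (simp add: m_def order_root)
  ultimately show ?thesis
    using fps_X_power_dvd_sub_taylor_jet[of "m - 1" h a] by simp
qed

lemma taylor_dvd_sub_taylor_wedderburn_sum:
  assumes "D \<noteq> 0"
  shows "taylor D a dvd gp_exp t a - taylor (wedderburn_sum t D) a"
proof (cases "poly D a = 0")
  case True
  define roots where "roots = {a. poly D a = 0}"
  define summand where "summand b = jet b (order b D - 1)
      (gp_exp t b * (taylor ([:-b, 1:] ^ order b D) b / taylor D b)) * root_cofactor b D" for b
  have "finite roots" "a \<in> roots"
    using assms True poly_roots_finite by (auto simp: roots_def)
  moreover have "wedderburn_sum t D = (\<Sum>b\<in>roots. summand b)"
    by (simp add: wedderburn_sum_def summand_def roots_def)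
  ultimately have "gp_exp t a - taylor (wedderburn_sum t D) a =
      (gp_exp t a - taylor (summand a) a) - (\<Sum>b\<in>roots - {a}. taylor (summand b) a)"
    by (simp add: taylor_add taylor_sum sum.remove)
  also have "fps_X ^ order a D dvd \<dots>"
  proof (rule dvd_diff)
    show "fps_X ^ order a D dvd gp_exp t a - taylor (summand a) a"
      unfolding summand_def by (rule fps_X_power_dvd_sub_taylor_wedderburn_summand[OF assms True])
    show "fps_X ^ order a D dvd (\<Sum>b\<in>roots - {a}. taylor (summand b) a)"
      unfolding summand_def using fps_X_power_dvd_taylor_mult_root_cofactor[OF assms]
      by (intro dvd_sum) auto
  qed
  finally show ?thesis by (simp add: taylor_dvd_iff[OF assms])
next
  case False
  then show ?thesis by (simp add: taylor_dvd_iff[OF assms] order_0I)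
qed

theorem mainTheorem5:
  fixes t :: real and D :: "complex poly"
  assumes "degree D > 0"
  shows "\<forall>R :: complex poly.
           (degree R < degree D \<and>
            (\<exists>q :: gpoly. gp_exp t = gp_add (gp_mult (gp_of_poly D) q) (gp_of_poly R)))
           \<longleftrightarrow> R = wedderburn_sum t D"
proof -
  have "D \<noteq> 0" using assms by auto
  have W: "degree (wedderburn_sum t D) < degree D"
      "\<And>a. taylor D a dvd gp_exp t a - taylor (wedderburn_sum t D) a"
    using degree_wedderburn_sum[OF assms] taylor_dvd_sub_taylor_wedderburn_sum[OF \<open>D \<noteq> 0\<close>]
    by blast+
  show ?thesis
    unfolding gp_remainder_iff
    using gp_remainder_unique[OF \<open>D \<noteq> 0\<close> _ W(1) _ W(2)] W by blast
qed

end
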